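(* Let $\mathbb{P}: M_2 \to M_2$ be the linear map $$\mathbb{P}\begin{pmatrix} x_{11} & x_{12} \\ x_{21} & x_{22}\end{pmatrix} = \begin{pmatrix} \frac{x_{11}+x_{22}}{2} & x_{12} \\ x_{21} & \frac{x_{11}+x_{22}}{2}\end{pmatrix}.$$ For a constant $\kappa_3$, define the linear map $\Phi_3$ on operators on $\mathbb{C}^2\otimes\mathbb{C}^2\otimes\mathbb{C}^2$ by $$\Phi_3(\varrho) = (\mathbb{P}\otimes\mathbb{I}\otimes\mathbb{I})(\varrho) + (\mathbb{I}\otimes\mathbb{P}\otimes\mathbb{I})(\varrho) + (\mathbb{I}\otimes\mathbb{I}\otimes\mathbb{P})(\varrho) + \kappa_3\, \mathrm{Tr}(\varrho)\, I,$$ where $\mathbb{I}$ is the identity map on $M_2$ and $I$ is the $8\times 8$ identity matrix. If $\kappa_3=\frac12$, then $\Phi_3(\rho)\ge 0$ for every biseparable three-qubit state $\rho$.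
   Context: A three-qubit state $\rho$ is biseparable if it can be written as $\rho = p_1\,\rho_1\otimes\rho_{23} + p_2\,\rho_2\otimes\rho_{13} + p_3\,\rho_3\otimes\rho_{12}$ (each term being a convex combination of product states across the indicated bipartition $1|23$, $2|13$, $3|12$ respectively, with the tensor factors placed on the indicated qubits), where $p_i\ge 0$, $\sum_i p_i=1$, and $\rho_i$, $\rho_{jk}$ are density matrices on the indicated qubits. $M_2$ is the space of complex $2\times 2$ matrices. *)

theory Defs
  imports "HOL-Analysis.Analysis"
begin

text \<open>Operators (square matrices) on C^('a), indexed by a finite type 'a.
  One qubit: index type bool (False = |0>, True = |1>).
  Three qubits: index type bool \<times> bool \<times> bool, the triple (i1,i2,i3) being the
  basis vector |i1 i2 i3> of C^2 (x) C^2 (x) C^2 (qubit 1 first).\<close>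
type_synonym 'a op = "'a \<Rightarrow> 'a \<Rightarrow> complex"
type_synonym qb3 = "bool \<times> bool \<times> bool"

definition tr :: "('a::finite) op \<Rightarrow> complex" where
  "tr A = (\<Sum>i\<in>UNIV. A i i)"

definition idop :: "('a::finite) op" where
  "idop = (\<lambda>i j. if i = j then 1 else 0)"

definition psd :: "('a::finite) op \<Rightarrow> bool" where
  "psd A \<longleftrightarrow> (\<forall>v :: 'a \<Rightarrow> complex.
     Im (\<Sum>i\<in>UNIV. \<Sum>j\<in>UNIV. cnj (v i) * A i j * v j) = 0 \<and>
     0 \<le> Re (\<Sum>i\<in>UNIV. \<Sum>j\<in>UNIV. cnj (v i) * A i j * v j))"

definition density :: "('a::finite) op \<Rightarrow> bool" where
  "density A \<longleftrightarrow> psd A \<and> tr A = 1"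

text \<open>Tensor products placing the one-qubit factor on qubit 1, 2, 3 respectively,
  and the two-qubit factor on the remaining qubits (in increasing order).\<close>
definition tensor1 :: "bool op \<Rightarrow> (bool \<times> bool) op \<Rightarrow> qb3 op" where
  "tensor1 a b = (\<lambda>(i1,i2,i3) (j1,j2,j3). a i1 j1 * b (i2,i3) (j2,j3))"
definition tensor2 :: "bool op \<Rightarrow> (bool \<times> bool) op \<Rightarrow> qb3 op" where
  "tensor2 a b = (\<lambda>(i1,i2,i3) (j1,j2,j3). a i2 j2 * b (i1,i3) (j1,j3))"
definition tensor3 :: "bool op \<Rightarrow> (bool \<times> bool) op \<Rightarrow> qb3 op" where
  "tensor3 a b = (\<lambda>(i1,i2,i3) (j1,j2,j3). a i3 j3 * b (i1,i2) (j1,j2))"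

definition bipartite_product_states :: "qb3 op set" where
  "bipartite_product_states =
     {tensor1 a b | a b. density a \<and> density b} \<union>
     {tensor2 a b | a b. density a \<and> density b} \<union>
     {tensor3 a b | a b. density a \<and> density b}"

definition biseparable :: "qb3 op \<Rightarrow> bool" where
  "biseparable \<rho> \<longleftrightarrow> (\<exists>(n::nat) (w::nat \<Rightarrow> real) (\<sigma>::nat \<Rightarrow> qb3 op).
     (\<forall>k<n. 0 \<le> w k \<and> \<sigma> k \<in> bipartite_product_states) \<and>
     (\<Sum>k<n. w k) = 1 \<and>
     \<rho> = (\<lambda>x y. \<Sum>k<n. complex_of_real (w k) * \<sigma> k x y))"

definition Pmap :: "bool op \<Rightarrow> bool op" where
  "Pmap x = (\<lambda>i j. if i = j then (x False False + x True True) / 2 else x i j)"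

definition P1 :: "qb3 op \<Rightarrow> qb3 op" where
  "P1 \<rho> = (\<lambda>(i1,i2,i3) (j1,j2,j3). Pmap (\<lambda>a b. \<rho> (a,i2,i3) (b,j2,j3)) i1 j1)"
definition P2 :: "qb3 op \<Rightarrow> qb3 op" where
  "P2 \<rho> = (\<lambda>(i1,i2,i3) (j1,j2,j3). Pmap (\<lambda>a b. \<rho> (i1,a,i3) (j1,b,j3)) i2 j2)"
definition P3 :: "qb3 op \<Rightarrow> qb3 op" where
  "P3 \<rho> = (\<lambda>(i1,i2,i3) (j1,j2,j3). Pmap (\<lambda>a b. \<rho> (i1,i2,a) (j1,j2,b)) i3 j3)"

definition Phi3 :: "real \<Rightarrow> qb3 op \<Rightarrow> qb3 op" where
  "Phi3 \<kappa> \<rho> = (\<lambda>x y. P1 \<rho> x y + P2 \<rho> x y + P3 \<rho> x y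
                        + complex_of_real \<kappa> * tr \<rho> * idop x y)"

end

theory Submission
  imports Defs
begin

(*
  By linearity it suffices to treat a product state a \<otimes> b with the one-qubit factor a on
  qubit 1; the other two cuts follow by permuting the qubits, which commutes with \<Phi>\<^sub>3.
  Since Tr a = Tr b = 1, the identity term splits and
    \<Phi>\<^sub>3(a \<otimes> b) = P(a) \<otimes> b + a \<otimes> \<Phi>\<^sub>2(b) + (I - a) \<otimes> I/2,
  where \<Phi>\<^sub>2 = P \<otimes> id + id \<otimes> P + Tr(\<cdot>) I/2 is the two-qubit analogue of \<Phi>\<^sub>3.
  Each summand is a tensor product of positive semidefinite matrices: for 2 \<times> 2 matrices
  positivity is the determinant criterion, which P and a \<mapsto> I - a (on states) preserve,
  and the quadratic form of \<Phi>\<^sub>2(b) at v is a positive combination of quadratic forms of b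
  at vectors obtained from v by local Pauli flips and complex conjugation.
*)

definition qform :: "('a::finite) op \<Rightarrow> ('a \<Rightarrow> complex) \<Rightarrow> complex" where
  "qform A v = (\<Sum>i\<in>UNIV. \<Sum>j\<in>UNIV. cnj (v i) * A i j * v j)"

lemma psd_iff_qform: "psd A \<longleftrightarrow> (\<forall>v. Im (qform A v) = 0 \<and> 0 \<le> Re (qform A v))"
  by (simp add: psd_def qform_def)

lemma sum_UNIV_bool: "(\<Sum>x\<in>(UNIV::bool set). f x) = f False + f True"
  by (simp add: UNIV_bool)

lemma sum_UNIV_prod:
  "(\<Sum>x\<in>(UNIV::('a::finite \<times> 'b::finite) set). f x) = (\<Sum>a\<in>UNIV. \<Sum>b\<in>UNIV. f (a, b))"
  by (subst UNIV_Times_UNIV [symmetric], subst sum.cartesian_product) simp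

lemma psd_add: "psd A \<Longrightarrow> psd B \<Longrightarrow> psd (\<lambda>x y. A x y + B x y)"
  by (simp add: psd_iff_qform qform_def sum.distrib algebra_simps)

lemma psd_nonneg_combination:
  fixes M :: "nat \<Rightarrow> ('a::finite) op"
  assumes "\<forall>k<n. 0 \<le> w k \<and> psd (M k)"
  shows "psd (\<lambda>x y. \<Sum>k<n. complex_of_real (w k) * M k x y)"
proof -
  have "qform (\<lambda>x y. \<Sum>k<n. complex_of_real (w k) * M k x y) v
      = (\<Sum>k<n. complex_of_real (w k) * qform (M k) v)" for v
    unfolding qform_def
    by (simp add: sum_distrib_left sum_distrib_right algebra_simps sum.swap[of _ "{..<n}"])
  then show ?thesis
    using assms by (auto simp: psd_iff_qform intro!: sum_nonneg)
qed

lemma psd_idop: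
  assumes "0 \<le> c"
  shows "psd ((\<lambda>x y. complex_of_real c * idop x y) :: ('a::finite) op)"
proof -
  have qform_eq: "qform (\<lambda>x y. complex_of_real c * idop x y) v
      = complex_of_real (c * (\<Sum>i\<in>UNIV. (cmod (v i))\<^sup>2))" for v :: "'a \<Rightarrow> complex"
  proof -
    have "cnj (v i) * (complex_of_real c * idop i j) * v j
        = (if i = j then complex_of_real (c * (cmod (v i))\<^sup>2) else 0)" for i j
      unfolding of_real_mult complex_norm_square by (simp add: idop_def mult_ac)
    then show ?thesis
      by (simp add: qform_def sum_distrib_left)
  qed
  show ?thesis
    unfolding psd_iff_qform qform_eq Re_complex_of_real Im_complex_of_real
    using assms by (simp add: sum_nonneg)
qed

lemma psd_permute:
  assumes "bij \<sigma>" "psd A"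
  shows "psd (\<lambda>x y. A (\<sigma> x) (\<sigma> y))"
proof -
  have "qform (\<lambda>x y. A (\<sigma> x) (\<sigma> y)) v = qform A (v \<circ> inv \<sigma>)" for v
    using assms(1) unfolding qform_def
    by (simp add: sum.reindex_bij_betw[of \<sigma> UNIV UNIV, symmetric] bij_is_inj)
  then show ?thesis
    using assms(2) by (simp add: psd_iff_qform)
qed

lemma tr_permute: "bij \<sigma> \<Longrightarrow> tr (\<lambda>x y. A (\<sigma> x) (\<sigma> y)) = tr A"
  unfolding tr_def by (rule sum.reindex_bij_betw)

definition hermitian_nonneg_minors :: "bool op \<Rightarrow> bool" where
  "hermitian_nonneg_minors a \<longleftrightarrow>
     Im (a False False) = 0 \<and> Im (a True True) = 0 \<and>
     0 \<le> Re (a False False) \<and> 0 \<le> Re (a True True) \<and>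
     a True False = cnj (a False True) \<and>
     (cmod (a False True))\<^sup>2 \<le> Re (a False False) * Re (a True True)"

lemma hermitian_nonneg_minors_entries:
  assumes "hermitian_nonneg_minors a"
  shows "a False False = complex_of_real (Re (a False False))"
    and "a True True = complex_of_real (Re (a True True))"
    and "a True False = cnj (a False True)"
  using assms by (simp_all add: hermitian_nonneg_minors_def complex_eq_iff)

lemma mixed_term_bound:
  fixes p q X Y :: real and c z :: complex
  assumes "0 \<le> p" "0 \<le> q" "0 \<le> X" "0 \<le> Y"
    and "(cmod c)\<^sup>2 \<le> p * q" "(cmod z)\<^sup>2 \<le> X * Y"
  shows "- 2 * Re (c * z) \<le> p * X + q * Y"
proof -
  have "(2 * (cmod c * cmod z))\<^sup>2 = 4 * ((cmod c)\<^sup>2 * (cmod z)\<^sup>2)"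
    by (simp add: power2_eq_square)
  also have "\<dots> \<le> 4 * ((p * q) * (X * Y))"
    using assms by (simp add: mult_mono)
  also have "\<dots> \<le> (p * X + q * Y)\<^sup>2"
    using zero_le_power2 [of "p * X - q * Y"] by (simp add: power2_eq_square algebra_simps)
  finally have "2 * (cmod c * cmod z) \<le> p * X + q * Y"
    by (rule power2_le_imp_le) (use assms in simp)
  moreover have "- Re (c * z) \<le> cmod c * cmod z"
    using abs_Re_le_cmod [of "c * z"] by (simp add: norm_mult)
  ultimately show ?thesis
    by linarith
qed

lemma entrywise_pairing_nonneg:
  assumes "hermitian_nonneg_minors a" "hermitian_nonneg_minors g"
  shows "Im (\<Sum>i\<in>UNIV. \<Sum>k\<in>UNIV. a i k * g i k) = 0
    \<and> 0 \<le> Re (\<Sum>i\<in>UNIV. \<Sum>k\<in>UNIV. a i k * g i k)"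
proof -
  define c z where "c = a False True" and "z = g False True"
  have "(\<Sum>i\<in>UNIV. \<Sum>k\<in>UNIV. a i k * g i k)
      = complex_of_real (Re (a False False) * Re (g False False)
          + Re (a True True) * Re (g True True)) + (c * z + cnj (c * z))"
    using hermitian_nonneg_minors_entries [OF assms(1)]
      hermitian_nonneg_minors_entries [OF assms(2)]
    by (simp add: sum_UNIV_bool c_def z_def)
  also have "\<dots> = complex_of_real (Re (a False False) * Re (g False False)
          + Re (a True True) * Re (g True True) + 2 * Re (c * z))"
    by (simp only: complex_add_cnj of_real_add)
  finally show ?thesis
    using mixed_term_bound [of "Re (a False False)" "Re (a True True)"
        "Re (g False False)" "Re (g True True)" c z] assms
    by (simp add: hermitian_nonneg_minors_def c_def z_def)
qed

lemma qform_bool: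
  "qform (a :: bool op) v = (\<Sum>i\<in>UNIV. \<Sum>k\<in>UNIV. a i k * (cnj (v i) * v k))"
  by (simp add: qform_def mult_ac)

lemma hermitian_nonneg_minors_rank_one:
  "hermitian_nonneg_minors (\<lambda>i k. cnj (v i) * v k)"
  by (simp add: hermitian_nonneg_minors_def norm_mult power_mult_distrib cmod_power2)
    (simp add: power2_eq_square)

lemma psd_if_hermitian_nonneg_minors:
  "hermitian_nonneg_minors a \<Longrightarrow> psd a"
  unfolding psd_iff_qform qform_bool
  using entrywise_pairing_nonneg hermitian_nonneg_minors_rank_one by blast

lemma qform_bool_expand:
  "qform (a :: bool op) v = cnj (v False) * a False False * v False
     + cnj (v False) * a False True * v True + cnj (v True) * a True False * v False
     + cnj (v True) * a True True * v True"
  by (simp add: qform_def sum_UNIV_bool)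

lemma hermitian_nonneg_minors_if_psd:
  assumes "psd a"
  shows "hermitian_nonneg_minors a"
proof -
  have form: "Im (qform a v) = 0 \<and> 0 \<le> Re (qform a v)" for v
    using assms by (simp add: psd_iff_qform)
  from form [of "\<lambda>b. if b then 0 else 1"]
  have diag0: "Im (a False False) = 0" "0 \<le> Re (a False False)"
    by (simp_all add: qform_bool_expand)
  from form [of "\<lambda>b. if b then 1 else 0"]
  have diag1: "Im (a True True) = 0" "0 \<le> Re (a True True)"
    by (simp_all add: qform_bool_expand)
  from form [of "\<lambda>b. 1"] form [of "\<lambda>b. if b then \<i> else 1"]
  have herm: "a True False = cnj (a False True)"
    using diag0 diag1 by (simp add: qform_bool_expand complex_eq_iff)
  define p q c where "p = Re (a False False)" and "q = Re (a True True)"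
    and "c = a False True"
  have entries: "a False False = complex_of_real p" "a True True = complex_of_real q"
    "a False True = c" "a True False = cnj c"
    using diag0 diag1 herm by (simp_all add: p_def q_def c_def complex_eq_iff)
  have cmod_sq: "cmod z * cmod z = Re z * Re z + Im z * Im z" for z
    using cmod_power2 [of z] by (simp add: power2_eq_square)
  have "(cmod c)\<^sup>2 \<le> p * q"
  proof (cases "0 < q")
    case True
    have "Re (qform a (\<lambda>b. if b then - cnj c else complex_of_real q)) = q * (p * q - (cmod c)\<^sup>2)"
      by (simp add: qform_bool_expand entries cmod_sq power2_eq_square algebra_simps)
    then show ?thesis
      using form True by (metis diff_ge_0_iff_ge zero_le_mult_iff not_le)
  next
    case False
    then have "q = 0"
      using diag1 by (simp add: q_def)
    have "Re (qform a (\<lambda>b. if b then - complex_of_real (p + 1) else c)) = - (p + 2) * (cmod c)\<^sup>2"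
      by (simp add: qform_bool_expand entries \<open>q = 0\<close> cmod_sq power2_eq_square algebra_simps)
    then have "(p + 2) * (cmod c)\<^sup>2 \<le> 0"
      using form by (metis mult_minus_left neg_0_le_iff_le)
    moreover have "0 \<le> p"
      using diag0 by (simp add: p_def)
    ultimately show ?thesis
      using \<open>q = 0\<close> by (simp add: mult_le_0_iff)
  qed
  then show ?thesis
    using diag0 diag1 herm by (simp add: hermitian_nonneg_minors_def p_def q_def c_def)
qed

lemma psd_bool_iff: "psd a \<longleftrightarrow> hermitian_nonneg_minors a"
  using hermitian_nonneg_minors_if_psd psd_if_hermitian_nonneg_minors by blast

lemma psd_Pmap:
  assumes "psd a"
  shows "psd (Pmap a)"
proof -
  let ?p = "Re (a False False)" and ?q = "Re (a True True)"
  have "(cmod (a False True))\<^sup>2 \<le> ?p * ?q"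
    using assms by (simp add: psd_bool_iff hermitian_nonneg_minors_def)
  also have "\<dots> \<le> (?p + ?q) / 2 * ((?p + ?q) / 2)"
    using zero_le_power2 [of "?p - ?q"] by (simp add: power2_eq_square field_simps)
  finally show ?thesis
    using assms by (simp add: psd_bool_iff hermitian_nonneg_minors_def Pmap_def)
qed

lemma psd_idop_minus_density:
  fixes a :: "bool op"
  assumes "density a"
  shows "psd (\<lambda>i j. idop i j - a i j)"
proof -
  have "a False False + a True True = 1"
    using assms by (simp add: density_def tr_def sum_UNIV_bool)
  then have "1 - a False False = a True True" "1 - a True True = a False False"
    by (simp_all add: algebra_simps)
  with assms show ?thesis
    by (simp add: density_def psd_bool_iff hermitian_nonneg_minors_def idop_def mult.commute)
qed

definition kron :: "bool op \<Rightarrow> ('b::finite) op \<Rightarrow> (bool \<times> 'b) op" where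
  "kron a B = (\<lambda>(i, x) (j, y). a i j * B x y)"

lemma psd_kron:
  fixes B :: "('b::finite) op"
  assumes "psd a" "psd B"
  shows "psd (kron a B)"
  unfolding psd_iff_qform
proof
  fix v :: "bool \<times> 'b \<Rightarrow> complex"
  define gram :: "bool op" where
    "gram i k = (\<Sum>x\<in>UNIV. \<Sum>y\<in>UNIV. cnj (v (i, x)) * B x y * v (k, y))" for i k
  have "qform gram u = qform B (\<lambda>x. u False * v (False, x) + u True * v (True, x))" for u
    by (simp add: qform_bool_expand gram_def qform_def sum_distrib_left sum_distrib_right
        sum.distrib algebra_simps)
  then have "psd gram"
    using assms(2) by (simp add: psd_iff_qform)
  have "qform (kron a B) v = (\<Sum>i\<in>UNIV. \<Sum>k\<in>UNIV. a i k * gram i k)"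
    by (simp add: qform_def kron_def gram_def sum_UNIV_prod sum_UNIV_bool
        sum_distrib_left sum.distrib algebra_simps)
  then show "Im (qform (kron a B) v) = 0 \<and> 0 \<le> Re (qform (kron a B) v)"
    using entrywise_pairing_nonneg assms(1) \<open>psd gram\<close> by (simp add: psd_bool_iff)
qed

definition Phi2 :: "real \<Rightarrow> (bool \<times> bool) op \<Rightarrow> (bool \<times> bool) op" where
  "Phi2 \<kappa> b = (\<lambda>(i1, i2) (j1, j2).
     Pmap (\<lambda>a c. b (a, i2) (c, j2)) i1 j1 + Pmap (\<lambda>a c. b (i1, a) (j1, c)) i2 j2
     + complex_of_real \<kappa> * tr b * idop (i1, i2) (j1, j2))"

lemma qform_Phi2_half:
  "qform (Phi2 (1/2) b) v = 3/2 * qform b v + 1/2 *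
     (qform b (\<lambda>(i, j). v (\<not> i, j))
      + qform b (\<lambda>(i, j). (if i then -1 else 1) * v (\<not> i, j))
      + qform b (\<lambda>(i, j). v (i, \<not> j))
      + qform b (\<lambda>(i, j). (if j then -1 else 1) * v (i, \<not> j))
      + qform b (\<lambda>(i, j). cnj ((if i = j then 1 else -1) * v (\<not> i, \<not> j))))"
  by (simp add: qform_def Phi2_def Pmap_def tr_def idop_def sum_UNIV_prod sum_UNIV_bool
      field_simps)

lemma psd_Phi2_half: "psd b \<Longrightarrow> psd (Phi2 (1/2) b)"
  by (simp add: psd_iff_qform qform_Phi2_half)

lemma tr_kron: "tr (kron a B) = tr a * tr B"
  by (simp add: tr_def kron_def sum_UNIV_prod sum_UNIV_bool sum_distrib_left algebra_simps)

lemma Phi3_kron_decomposition: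
  assumes "tr a = 1" "tr b = 1"
  shows "Phi3 (1/2) (kron a b) = (\<lambda>x y. kron (Pmap a) b x y + kron a (Phi2 (1/2) b) x y
           + kron (\<lambda>i j. idop i j - a i j) (\<lambda>x y. 1/2 * idop x y) x y)"
proof (intro ext)
  fix x y :: qb3
  show "Phi3 (1/2) (kron a b) x y = kron (Pmap a) b x y + kron a (Phi2 (1/2) b) x y
           + kron (\<lambda>i j. idop i j - a i j) (\<lambda>x y. 1/2 * idop x y) x y"
    unfolding Phi3_def tr_kron assms
    by (cases x rule: prod_cases3, cases y rule: prod_cases3)
      (simp add: P1_def P2_def P3_def Phi2_def Pmap_def kron_def idop_def assms field_simps)
qed

lemma psd_Phi3_kron:
  assumes "density a" "density b"
  shows "psd (Phi3 (1/2) (kron a b))"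
proof -
  have "tr a = 1" "tr b = 1" "psd a" "psd b"
    using assms by (simp_all add: density_def)
  moreover have "psd ((\<lambda>x y. 1/2 * idop x y) :: (bool \<times> bool) op)"
    using psd_idop [of "1/2"] by simp
  ultimately show ?thesis
    unfolding Phi3_kron_decomposition [OF \<open>tr a = 1\<close> \<open>tr b = 1\<close>]
    by (intro psd_add psd_kron psd_Pmap psd_Phi2_half psd_idop_minus_density assms)
qed

definition swap12 :: "qb3 \<Rightarrow> qb3" where
  "swap12 = (\<lambda>(i1, i2, i3). (i2, i1, i3))"

definition cycle :: "qb3 \<Rightarrow> qb3" where
  "cycle = (\<lambda>(i1, i2, i3). (i3, i1, i2))"

lemma bij_qubit_permutation:
  assumes "\<sigma> \<in> {id, swap12, cycle}"
  shows "bij \<sigma>"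
proof -
  have "bij swap12"
    by (rule o_bij [where g = swap12]) (auto simp: swap12_def)
  moreover have "bij cycle"
    by (rule o_bij [where g = "\<lambda>(i3, i1, i2). (i1, i2, i3)"]) (auto simp: cycle_def)
  ultimately show ?thesis
    using assms by auto
qed

lemma Phi3_permute:
  assumes "\<sigma> \<in> {id, swap12, cycle}"
  shows "Phi3 \<kappa> (\<lambda>x y. A (\<sigma> x) (\<sigma> y)) = (\<lambda>x y. Phi3 \<kappa> A (\<sigma> x) (\<sigma> y))"
proof (intro ext)
  fix x y :: qb3
  have "tr (\<lambda>x y. A (\<sigma> x) (\<sigma> y)) = tr A"
    using assms by (intro tr_permute bij_qubit_permutation)
  then show "Phi3 \<kappa> (\<lambda>x y. A (\<sigma> x) (\<sigma> y)) x y = Phi3 \<kappa> A (\<sigma> x) (\<sigma> y)"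
    unfolding Phi3_def using assms
    by (cases x rule: prod_cases3, cases y rule: prod_cases3)
      (auto simp: P1_def P2_def P3_def swap12_def cycle_def idop_def)
qed

lemma product_state_as_permuted_kron:
  assumes "s \<in> bipartite_product_states"
  obtains a b \<sigma> where "density a" "density b" "\<sigma> \<in> {id, swap12, cycle}"
    "s = (\<lambda>x y. kron a b (\<sigma> x) (\<sigma> y))"
proof -
  have "tensor1 a b = (\<lambda>x y. kron a b (id x) (id y))"
    "tensor2 a b = (\<lambda>x y. kron a b (swap12 x) (swap12 y))"
    "tensor3 a b = (\<lambda>x y. kron a b (cycle x) (cycle y))" for a b
    by (auto simp: fun_eq_iff tensor1_def tensor2_def tensor3_def kron_def swap12_def cycle_def)
  with assms that show ?thesis
    unfolding bipartite_product_states_def by blast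
qed

lemma psd_Phi3_product_state:
  assumes "s \<in> bipartite_product_states"
  shows "psd (Phi3 (1/2) s)"
proof -
  obtain a b \<sigma> where ab: "density a" "density b" and \<sigma>: "\<sigma> \<in> {id, swap12, cycle}"
    and s: "s = (\<lambda>x y. kron a b (\<sigma> x) (\<sigma> y))"
    using assms by (rule product_state_as_permuted_kron)
  show ?thesis
    unfolding s Phi3_permute [OF \<sigma>]
    using bij_qubit_permutation [OF \<sigma>] psd_Phi3_kron [OF ab] by (rule psd_permute)
qed

lemma Pmap_sum:
  "Pmap (\<lambda>a b. \<Sum>k<n. c k * f k a b) i j = (\<Sum>k<n. c k * Pmap (f k) i j)"
  by (cases "i = j") (simp_all add: Pmap_def sum.distrib add_divide_distrib sum_divide_distrib
      ring_distribs)

lemma tr_sum: "tr (\<lambda>x y. \<Sum>k<n. c k * A k x y) = (\<Sum>k<n. c k * tr (A k))"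
  by (simp add: tr_def sum_distrib_left sum.swap [of _ UNIV])

lemma Phi3_sum:
  "Phi3 \<kappa> (\<lambda>x y. \<Sum>k<n. c k * A k x y) = (\<lambda>x y. \<Sum>k<n. c k * Phi3 \<kappa> (A k) x y)"
proof (intro ext)
  fix x y :: qb3
  have "P1 (\<lambda>x y. \<Sum>k<n. c k * A k x y) x y = (\<Sum>k<n. c k * P1 (A k) x y)"
    "P2 (\<lambda>x y. \<Sum>k<n. c k * A k x y) x y = (\<Sum>k<n. c k * P2 (A k) x y)"
    "P3 (\<lambda>x y. \<Sum>k<n. c k * A k x y) x y = (\<Sum>k<n. c k * P3 (A k) x y)"
    by (cases x rule: prod_cases3, cases y rule: prod_cases3, simp add: P1_def P2_def P3_def Pmap_sum)+
  then show "Phi3 \<kappa> (\<lambda>x y. \<Sum>k<n. c k * A k x y) x y = (\<Sum>k<n. c k * Phi3 \<kappa> (A k) x y)"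
    by (simp add: Phi3_def tr_sum sum.distrib sum_distrib_left sum_distrib_right ring_distribs mult_ac)
qed

theorem theorem1:
  fixes \<rho> :: "qb3 op"
  assumes "biseparable \<rho>"
  shows "psd (Phi3 (1/2) \<rho>)"
proof -
  obtain n :: nat and w \<sigma> where comb: "\<forall>k<n. 0 \<le> w k \<and> \<sigma> k \<in> bipartite_product_states"
    and \<rho>: "\<rho> = (\<lambda>x y. \<Sum>k<n. complex_of_real (w k) * \<sigma> k x y)"
    using assms unfolding biseparable_def by blast
  show ?thesis
    unfolding \<rho> Phi3_sum
    using comb psd_Phi3_product_state by (intro psd_nonneg_combination) blast
qed

end
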